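(* Let $W:\mathbb{R}^{3\times2}_+\to[0,\infty)$ be continuously differentiable and satisfy (H4): there is a constant $K>0$ such that $|W_F(\bm F)\bm F^T|\le K(W(\bm F)+1)$ for all $\bm F\in\mathbb{R}^{3\times2}_+$. Let $V\subset\mathbb{R}^3$ be a $2$-dimensional subspace, $\bm 1$ the identity on $V$, and $\bm T\in L(V)$. If $|\bm T-\bm 1|<\delta$ with $\delta>0$ sufficiently small, then there is a constant $C>0$ such that $|W_F(\bm T\bm A)\bm A^T|\le C(W(\bm A)+1)$ for all $\bm A\in L(\mathbb{R}^2,V)\cap\mathbb{R}^{3\times2}_+$.
   Context: $\mathbb{R}^{3\times2}_+:=\{\bm F\in\mathbb{R}^{3\times2}:\det(\bm F^T\bm F)>0\}$ (an open subset of $\mathbb{R}^{3\times2}$); $W_F$ denotes the derivative of $W$ with respect to $\bm F$, a $3\times2$ matrix; $|\cdot|$ is the Frobenius norm (so $|\bm 1|=\sqrt2$). Elements of $L(\mathbb{R}^2,V)$ are identified with $3\times2$ matrices whose columns lie in $V$. *)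

theory Defs
  imports "HOL-Analysis.Analysis"
begin

text \<open>3x2 real matrices are modelled as real^2^3 (3 rows, 2 columns);
  the norm on this type is the Frobenius norm.\<close>

definition Rplus32 :: "(real^2^3) set" where
  "Rplus32 = {F. det (transpose F ** F) > 0}"

definition orthonormal_basis_of :: "(real^3) set \<Rightarrow> (real^3) set \<Rightarrow> bool" where
  "orthonormal_basis_of V B \<longleftrightarrow> B \<subseteq> V \<and> pairwise orthogonal B \<and> (\<forall>x\<in>B. norm x = 1) \<and> span B = V"

text \<open>Frobenius norm of a linear map L restricted to V (computed in an orthonormal basis of V;
  it is independent of the chosen basis).\<close>
definition frob_norm_on :: "(real^3) set \<Rightarrow> (real^3 \<Rightarrow> real^3) \<Rightarrow> real" where
  "frob_norm_on V L = sqrt (\<Sum>b\<in>(SOME B. orthonormal_basis_of V B). (norm (L b))\<^sup>2)"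

end

theory Submission
  imports Defs
begin

text \<open>Write \<open>A\<^sub>t = A + t (T - 1) A\<close> for \<open>0 \<le> t \<le> 1\<close>. If \<open>|T - 1| \<le> 1/2\<close> on \<open>V\<close> and the
  columns of \<open>A\<close> lie in \<open>V\<close>, then \<open>|A x| \<le> 2 |A\<^sub>t x|\<close>; hence every \<open>A\<^sub>t\<close> lies in
  \<open>Rplus32\<close> and \<open>|G A\<^sup>T| \<le> 2 |G A\<^sub>t\<^sup>T|\<close> for every \<open>G\<close>. Moving \<open>A\<close> across the
  inner product, \<open>d/dt W(A\<^sub>t) = W\<^sub>F(A\<^sub>t) : (T - 1) A = (T - 1) : W\<^sub>F(A\<^sub>t) A\<^sup>T\<close>, which by (H4)
  is at most \<open>2 K |T - 1| (W(A\<^sub>t) + 1)\<close>. Gronwall's inequality gives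
  \<open>W(T A) + 1 \<le> exp (2 K |T - 1|) (W(A) + 1)\<close>, and (H4) at \<open>T A\<close> yields the claim with
  \<open>C = 2 K exp (2 K |T - 1|)\<close>.\<close>

lemma matrix_mult_transpose_row:
  fixes G :: "real^'n^'m" and A :: "real^'n^'k"
  shows "(G ** transpose A) $ i = A *v (G $ i)"
  by (simp add: vec_eq_iff matrix_matrix_mult_def matrix_vector_mult_def transpose_def mult.commute)

lemma inner_matrix_mult_right:
  fixes G :: "real^'n^'m" and N :: "real^'k^'m" and A :: "real^'n^'k"
  shows "G \<bullet> (N ** A) = N \<bullet> (G ** transpose A)"
proof -
  have "G \<bullet> (N ** A) = (\<Sum>i\<in>UNIV. \<Sum>j\<in>UNIV. \<Sum>k\<in>UNIV. G$i$j * (N$i$k * A$k$j))"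
    by (simp add: inner_vec_def matrix_matrix_mult_def sum_distrib_left)
  also have "\<dots> = (\<Sum>i\<in>UNIV. \<Sum>k\<in>UNIV. \<Sum>j\<in>UNIV. N$i$k * (G$i$j * A$k$j))"
    by (rule sum.cong[OF refl], subst sum.swap) (simp add: algebra_simps)
  also have "\<dots> = N \<bullet> (G ** transpose A)"
    by (simp add: inner_vec_def matrix_matrix_mult_def sum_distrib_left transpose_def)
  finally show ?thesis .
qed

lemma norm_matrix_le_rowwise:
  fixes X Y :: "real^'n^'m"
  assumes rows: "\<And>i. norm (X $ i) \<le> c * norm (Y $ i)" and "c \<ge> 0"
  shows "norm X \<le> c * norm Y"
proof (rule power2_le_imp_le)
  have "(norm X)\<^sup>2 = (\<Sum>i\<in>UNIV. (norm (X $ i))\<^sup>2)"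
    by (simp add: norm_vec_def L2_set_def sum_nonneg)
  also have "\<dots> \<le> (\<Sum>i\<in>UNIV. (c * norm (Y $ i))\<^sup>2)"
    by (intro sum_mono power_mono rows) simp
  also have "\<dots> = (c * norm Y)\<^sup>2"
    by (simp add: norm_vec_def L2_set_def sum_nonneg power_mult_distrib sum_distrib_left)
  finally show "(norm X)\<^sup>2 \<le> (c * norm Y)\<^sup>2" .
  show "0 \<le> c * norm Y"
    using \<open>c \<ge> 0\<close> by simp
qed

lemma norm_mult_transpose_le:
  fixes G :: "real^'n^'m" and A B :: "real^'n^'k"
  assumes "\<And>x. norm (A *v x) \<le> c * norm (B *v x)" and "c \<ge> 0"
  shows "norm (G ** transpose A) \<le> c * norm (G ** transpose B)"
  using assms by (intro norm_matrix_le_rowwise) (simp_all add: matrix_mult_transpose_row)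

lemma matrix_mult_diff_rdistrib:
  fixes X Y :: "real^'k^'m" and A :: "real^'n^'k"
  shows "(X - Y) ** A = X ** A - Y ** A"
  by (simp add: vec_eq_iff matrix_matrix_mult_def algebra_simps sum_subtractf)

lemma det_gram_nonneg:
  fixes F :: "real^2^'m"
  shows "det (transpose F ** F) \<ge> 0"
proof -
  have entry: "(transpose F ** F) $ i $ j = column i F \<bullet> column j F" for i j
    by (simp add: matrix_matrix_mult_def transpose_def column_def inner_vec_def)
  have "(column 1 F \<bullet> column 2 F)\<^sup>2 \<le> (column 1 F \<bullet> column 1 F) * (column 2 F \<bullet> column 2 F)"
    by (rule Cauchy_Schwarz_ineq)
  then show ?thesis
    by (simp add: det_2 entry inner_commute power2_eq_square)
qed

lemma gram_mult_eq_0_iff: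
  fixes F :: "real^'n^'m"
  shows "(transpose F ** F) *v x = 0 \<longleftrightarrow> F *v x = 0"
proof
  assume "(transpose F ** F) *v x = 0"
  then have "(F *v x) \<bullet> (F *v x) = 0"
    by (metis dot_lmul_matrix inner_zero_right matrix_vector_mul_assoc
        vector_transpose_matrix)
  then show "F *v x = 0"
    by simp
qed (simp flip: matrix_vector_mul_assoc)

lemma Rplus32_iff_ker_trivial:
  "F \<in> Rplus32 \<longleftrightarrow> (\<forall>x. F *v x = 0 \<longrightarrow> x = 0)"
proof -
  have "F \<in> Rplus32 \<longleftrightarrow> invertible (transpose F ** F)"
    unfolding Rplus32_def invertible_det_nz using det_gram_nonneg[of F] by auto
  also have "\<dots> \<longleftrightarrow> (\<forall>x. F *v x = 0 \<longrightarrow> x = 0)"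
    by (simp add: invertible_left_inverse matrix_left_invertible_ker gram_mult_eq_0_iff)
  finally show ?thesis .
qed

lemma Rplus32_if_dominates:
  assumes "A \<in> Rplus32" and "\<And>x. norm (A *v x) \<le> c * norm (B *v x)"
  shows "B \<in> Rplus32"
  unfolding Rplus32_iff_ker_trivial
proof (intro allI impI)
  fix x
  assume "B *v x = 0"
  then have "A *v x = 0"
    using assms(2)[of x] by simp
  then show "x = 0"
    using assms(1) by (simp add: Rplus32_iff_ker_trivial)
qed

lemma norm_le_frob_norm_on:
  fixes L :: "real^3 \<Rightarrow> real^3"
  assumes "subspace V" and "linear L" and "v \<in> V"
  shows "norm (L v) \<le> frob_norm_on V L * norm v"
proof -
  define B where "B = (SOME B. orthonormal_basis_of V B)"
  have "orthonormal_basis_of V B"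
    unfolding B_def orthonormal_basis_of_def
    by (rule someI_ex) (metis orthonormal_basis_subspace[OF \<open>subspace V\<close>])
  then have orth: "pairwise orthogonal B" and unit: "\<And>b. b \<in> B \<Longrightarrow> norm b = 1"
    and "span B = V"
    unfolding orthonormal_basis_of_def by auto
  then have "finite B"
    by (metis pairwise_orthogonal_imp_finite)
  have v: "v = (\<Sum>b\<in>B. (v \<bullet> b) *\<^sub>R b)"
    using orthonormal_basis_expand[OF orth unit _ \<open>finite B\<close>] \<open>span B = V\<close> \<open>v \<in> V\<close> by simp
  have "norm v = L2_set (\<lambda>b. v \<bullet> b) B"
  proof -
    have "v \<bullet> v = (\<Sum>b\<in>B. (v \<bullet> b)\<^sup>2)"
      by (subst (1) v) (simp add: inner_sum_right inner_commute power2_eq_square)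
    then show ?thesis
      by (simp add: L2_set_def norm_eq_sqrt_inner)
  qed
  have "norm (L v) = norm (\<Sum>b\<in>B. (v \<bullet> b) *\<^sub>R L b)"
    by (subst v) (simp add: linear_sum[OF \<open>linear L\<close>] linear_scale[OF \<open>linear L\<close>])
  also have "\<dots> \<le> (\<Sum>b\<in>B. \<bar>v \<bullet> b\<bar> * norm (L b))"
    by (rule order_trans[OF norm_sum]) simp
  also have "\<dots> \<le> L2_set (\<lambda>b. v \<bullet> b) B * L2_set (\<lambda>b. norm (L b)) B"
    using L2_set_mult_ineq[of "\<lambda>b. v \<bullet> b" "\<lambda>b. norm (L b)" B] by simp
  also have "L2_set (\<lambda>b. norm (L b)) B = frob_norm_on V L"
    by (simp add: frob_norm_on_def L2_set_def B_def)
  finally show ?thesis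
    using \<open>norm v = _\<close> by (simp add: mult.commute)
qed

lemma gronwall_exp_bound:
  fixes g g' :: "real \<Rightarrow> real"
  assumes "a \<le> b"
    and deriv: "\<And>t. t \<in> {a..b} \<Longrightarrow> (g has_real_derivative g' t) (at t)"
    and pos: "\<And>t. t \<in> {a..b} \<Longrightarrow> g t > 0"
    and growth: "\<And>t. t \<in> {a..b} \<Longrightarrow> g' t \<le> M * g t"
  shows "g b \<le> exp (M * (b - a)) * g a"
proof (cases "a = b")
  case False
  then have "a < b"
    using \<open>a \<le> b\<close> by simp
  have "((\<lambda>t. ln (g t)) has_real_derivative g' t / g t) (at t)" if "a \<le> t" "t \<le> b" for t
    using that by (auto intro!: derivative_eq_intros deriv pos)
  then obtain z where z: "a < z" "z < b" and mvt: "ln (g b) - ln (g a) = (b - a) * (g' z / g z)"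
    using MVT2[OF \<open>a < b\<close>, of "\<lambda>t. ln (g t)" "\<lambda>t. g' t / g t"] by blast
  have "g' z / g z \<le> M"
    using z growth[of z] pos[of z] by (simp add: divide_le_eq)
  then have "(b - a) * (g' z / g z) \<le> (b - a) * M"
    using \<open>a < b\<close> by (intro mult_left_mono) auto
  then have "ln (g b) \<le> ln (g a) + M * (b - a)"
    using mvt mult.commute[of M "b - a"] by linarith
  then have "exp (ln (g b)) \<le> exp (M * (b - a)) * exp (ln (g a))"
    by (simp add: mult_exp_exp add.commute)
  then show ?thesis
    using pos \<open>a \<le> b\<close> by simp
qed simp

lemma norm_le_twice_norm_add:
  fixes y z :: "'a::real_normed_vector"
  assumes "norm z \<le> norm y / 2"
  shows "norm y \<le> 2 * norm (y + z)"
  using assms norm_diff_ineq[of y z] by linarith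

lemma norm_le_twice_along_segment:
  fixes T :: "real^3 \<Rightarrow> real^3" and A :: "real^'n^3"
  assumes "subspace V" and "linear T" and small: "frob_norm_on V (\<lambda>x. T x - x) \<le> 1/2"
    and cols: "\<And>j. column j A \<in> V" and t: "t \<in> {0..1}"
  shows "norm (A *v x) \<le> 2 * norm ((A + t *\<^sub>R ((matrix T - mat 1) ** A)) *v x)"
proof -
  define y where "y = A *v x"
  have "columns A \<subseteq> V"
    using cols by (auto simp: columns_def)
  then have "y \<in> V"
    unfolding y_def using matrix_vector_mult_in_columnspace span_minimal \<open>subspace V\<close> by blast
  have "linear (\<lambda>x. T x - x)"
    using \<open>linear T\<close> by (intro linear_compose_sub linear_ident)
  then have "norm (T y - y) \<le> frob_norm_on V (\<lambda>x. T x - x) * norm y"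
    using norm_le_frob_norm_on \<open>subspace V\<close> \<open>y \<in> V\<close> by blast
  then have "norm (t *\<^sub>R (T y - y)) \<le> 1 * (frob_norm_on V (\<lambda>x. T x - x) * norm y)"
    using t mult_mono[of "\<bar>t\<bar>" 1 "norm (T y - y)"] by simp
  also have "\<dots> \<le> norm y / 2"
    using small mult_right_mono[OF small norm_ge_zero[of y]] by simp
  finally have "norm y \<le> 2 * norm (y + t *\<^sub>R (T y - y))"
    by (rule norm_le_twice_norm_add)
  moreover have "(A + t *\<^sub>R ((matrix T - mat 1) ** A)) *v x = y + t *\<^sub>R (T y - y)"
    using \<open>linear T\<close>
    by (simp add: y_def matrix_vector_mult_add_rdistrib matrix_vector_mult_diff_rdistrib
        scaleR_matrix_vector_assoc[symmetric] matrix_vector_mul_assoc[symmetric] matrix_works)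
  ultimately show ?thesis
    by (simp add: y_def)
qed

locale stored_energy =
  fixes W :: "real^2^3 \<Rightarrow> real" and WF :: "real^2^3 \<Rightarrow> real^2^3" and K :: real
  assumes W_nonneg: "\<And>F. F \<in> Rplus32 \<Longrightarrow> W F \<ge> 0"
    and W_deriv: "\<And>F. F \<in> Rplus32 \<Longrightarrow> (W has_derivative (\<lambda>H. WF F \<bullet> H)) (at F)"
    and WF_bound: "\<And>F. F \<in> Rplus32 \<Longrightarrow> norm (WF F ** transpose F) \<le> K * (W F + 1)"
begin

lemma W_segment_growth:
  assumes "A \<in> Rplus32" and "c \<ge> 0"
    and dom: "\<And>t x. t \<in> {0..1} \<Longrightarrow> norm (A *v x) \<le> c * norm ((A + t *\<^sub>R (N ** A)) *v x)"
  shows "W (A + N ** A) + 1 \<le> exp (c * K * norm N) * (W A + 1)"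
proof -
  define B where "B = (\<lambda>t. A + t *\<^sub>R (N ** A))"
  have B_in: "B t \<in> Rplus32" if "t \<in> {0..1}" for t
    unfolding B_def using Rplus32_if_dominates[OF \<open>A \<in> Rplus32\<close> dom[OF that]] by simp
  have deriv: "((\<lambda>t. W (B t) + 1) has_real_derivative WF (B t) \<bullet> (N ** A)) (at t)"
    if "t \<in> {0..1}" for t
  proof -
    have "(B has_derivative (\<lambda>s. s *\<^sub>R (N ** A))) (at t)"
      unfolding B_def by (auto intro!: derivative_eq_intros)
    then have "((W \<circ> B) has_derivative (\<lambda>H. WF (B t) \<bullet> H) \<circ> (\<lambda>s. s *\<^sub>R (N ** A))) (at t)"
      using W_deriv[OF B_in[OF that]] by (rule diff_chain_at)
    then have "((\<lambda>t. W (B t)) has_real_derivative WF (B t) \<bullet> (N ** A)) (at t)"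
      by (simp add: has_field_derivative_def comp_def mult_commute_abs)
    then show ?thesis
      using DERIV_add[OF _ DERIV_const] by simp
  qed
  have growth: "WF (B t) \<bullet> (N ** A) \<le> c * K * norm N * (W (B t) + 1)" if "t \<in> {0..1}" for t
  proof -
    have "WF (B t) \<bullet> (N ** A) = N \<bullet> (WF (B t) ** transpose A)"
      by (rule inner_matrix_mult_right)
    also have "\<dots> \<le> norm N * norm (WF (B t) ** transpose A)"
      by (rule norm_cauchy_schwarz)
    also have "\<dots> \<le> norm N * (c * norm (WF (B t) ** transpose (B t)))"
      using dom[OF that] \<open>c \<ge> 0\<close> by (intro mult_left_mono norm_mult_transpose_le) (simp_all add: B_def)
    also have "\<dots> \<le> norm N * (c * (K * (W (B t) + 1)))"
      using WF_bound[OF B_in[OF that]] \<open>c \<ge> 0\<close> by (intro mult_left_mono) auto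
    finally show ?thesis
      by (simp add: algebra_simps)
  qed
  have "W (B 1) + 1 \<le> exp (c * K * norm N * (1 - 0)) * (W (B 0) + 1)"
    using deriv growth W_nonneg[OF B_in] by (intro gronwall_exp_bound) force+
  then show ?thesis
    by (simp add: B_def)
qed

lemma WF_transpose_bound:
  assumes "A \<in> Rplus32" and "c \<ge> 0"
    and dom: "\<And>t x. t \<in> {0..1} \<Longrightarrow> norm (A *v x) \<le> c * norm ((A + t *\<^sub>R (N ** A)) *v x)"
  shows "norm (WF (A + N ** A) ** transpose A) \<le> c * K * exp (c * K * norm N) * (W A + 1)"
proof -
  have dom1: "norm (A *v x) \<le> c * norm ((A + N ** A) *v x)" for x
    using dom[of 1 x] by simp
  have "K \<ge> 0"
  proof -
    have "0 \<le> K * (W A + 1)"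
      using WF_bound[OF \<open>A \<in> Rplus32\<close>] norm_ge_zero order_trans by blast
    moreover have "W A + 1 > 0"
      using W_nonneg[OF \<open>A \<in> Rplus32\<close>] by simp
    ultimately show ?thesis
      by (simp add: zero_le_mult_iff)
  qed
  have "norm (WF (A + N ** A) ** transpose A) \<le> c * norm (WF (A + N ** A) ** transpose (A + N ** A))"
    using dom1 \<open>c \<ge> 0\<close> by (rule norm_mult_transpose_le)
  also have "\<dots> \<le> c * (K * (W (A + N ** A) + 1))"
    using WF_bound[OF Rplus32_if_dominates[OF \<open>A \<in> Rplus32\<close> dom1]] \<open>c \<ge> 0\<close>
    by (rule mult_left_mono)
  also have "\<dots> \<le> c * (K * (exp (c * K * norm N) * (W A + 1)))"
    using W_segment_growth[OF assms] \<open>c \<ge> 0\<close> \<open>K \<ge> 0\<close> by (intro mult_left_mono) auto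
  finally show ?thesis
    by (simp add: mult.assoc)
qed

end

theorem lemma10:
  fixes W :: "real^2^3 \<Rightarrow> real"
    and WF :: "real^2^3 \<Rightarrow> real^2^3"
    and K :: real
    and V :: "(real^3) set"
  assumes W_nonneg: "\<And>F. F \<in> Rplus32 \<Longrightarrow> W F \<ge> 0"
    and W_deriv: "\<And>F. F \<in> Rplus32 \<Longrightarrow> (W has_derivative (\<lambda>H. WF F \<bullet> H)) (at F)"
    and WF_cont: "continuous_on Rplus32 WF"
    and K_pos: "K > 0"
    and H4: "\<And>F. F \<in> Rplus32 \<Longrightarrow> norm (WF F ** transpose F) \<le> K * (W F + 1)"
    and V_sub: "subspace V"
    and V_dim: "dim V = 2"
  shows "\<exists>\<delta>>0. \<forall>T :: real^3 \<Rightarrow> real^3.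
           linear T \<and> T ` V \<subseteq> V \<and> frob_norm_on V (\<lambda>x. T x - x) < \<delta> \<longrightarrow>
           (\<exists>C>0. \<forall>A :: real^2^3. (\<forall>j. column j A \<in> V) \<and> A \<in> Rplus32 \<longrightarrow>
               norm (WF (matrix T ** A) ** transpose A) \<le> C * (W A + 1))"
proof (rule exI[of _ "1/2"], intro conjI allI impI)
  interpret stored_energy W WF K
    using W_nonneg W_deriv H4 by unfold_locales
  fix T :: "real^3 \<Rightarrow> real^3"
  assume T: "linear T \<and> T ` V \<subseteq> V \<and> frob_norm_on V (\<lambda>x. T x - x) < 1/2"
  define N where "N = matrix T - mat 1"
  show "\<exists>C>0. \<forall>A. (\<forall>j. column j A \<in> V) \<and> A \<in> Rplus32 \<longrightarrow>
          norm (WF (matrix T ** A) ** transpose A) \<le> C * (W A + 1)"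
  proof (intro exI[of _ "2 * K * exp (2 * K * norm N)"] conjI allI impI)
    fix A :: "real^2^3"
    assume A: "(\<forall>j. column j A \<in> V) \<and> A \<in> Rplus32"
    have "matrix T ** A = A + N ** A"
      by (simp add: N_def matrix_mult_diff_rdistrib)
    moreover have "norm (A *v x) \<le> 2 * norm ((A + t *\<^sub>R (N ** A)) *v x)" if "t \<in> {0..1}" for t x
      unfolding N_def using T A that by (intro norm_le_twice_along_segment[OF V_sub]) auto
    ultimately show "norm (WF (matrix T ** A) ** transpose A) \<le> 2 * K * exp (2 * K * norm N) * (W A + 1)"
      using WF_transpose_bound A by simp
  qed (use K_pos in simp)
qed simp

end
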